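(* Let $X=\{(u,v)\in\mathbb{R}^2:uv>0\}\cup\{\theta\}$ with $\theta=(0,0)$, equipped with the relative Euclidean topology $\tau$ and the coordinatewise partial order $\preceq$. Then $(X,\tau,\preceq)$ is a partially ordered topological space, and: (a) $\theta$ is neither a $\preceq$-upper singular point nor a $\preceq$-upper compact bounded point; (b) the map $x^\downarrow\mapsto x$ from $(C^\downarrow(X),\tau_F)$ to $(X,\tau)$ is not continuous at $\theta^\downarrow$.
   Context: A partially ordered topological space is a topological space with a partial order whose graph is closed in $X\times X$. $x^\downarrow=\{u\in X:u\preceq x\}$, $x^\uparrow=\{u\in X:x\preceq u\}$ (taken inside $X$). $C(X)$ = closed subsets of $X$, $C^\downarrow(X)=\{x^\downarrow:x\in X\}$; the Fell topology $\tau_F$ on $C(X)$ is generated by the sets $\{A:A\cap O\neq\emptyset\}$ ($O$ open) and $\{A:A\cap D=\emptyset\}$ ($D$ compact), and $C^\downarrow(X)$ carries the relative topology. $x$ is a $\preceq$-upper singular point if for every open neighborhood $O$ of $x$ there is an open neighborhood $O_1\subseteq O$ of $x$ with no $y\in X\setminus O_1$ satisfying $u\preceq y$ for some $u\in O_1$. $x$ is a $\preceq$-upper compact bounded point if for every open neighborhood $O$ of $x$ there are $a,b\in O$, $b\preceq a$, with $b^\uparrow\cap a^\downarrow\subseteq O$, $x\in\mathrm{int}(b^\uparrow\cap a^\downarrow)$, and $(b^\uparrow\cap a^\downarrow)\setminus\mathrm{int}\,a^\downarrow$ nonempty and compact. *)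

theory Defs
  imports "HOL-Analysis.Analysis"
begin

definition pots :: "'a topology \<Rightarrow> ('a \<Rightarrow> 'a \<Rightarrow> bool) \<Rightarrow> bool" where
  "pots T le \<longleftrightarrow>
     (\<forall>x\<in>topspace T. le x x) \<and>
     (\<forall>x\<in>topspace T. \<forall>y\<in>topspace T. le x y \<and> le y x \<longrightarrow> x = y) \<and>
     (\<forall>x\<in>topspace T. \<forall>y\<in>topspace T. \<forall>z\<in>topspace T. le x y \<and> le y z \<longrightarrow> le x z) \<and>
     closedin (prod_topology T T) {(x, y). x \<in> topspace T \<and> y \<in> topspace T \<and> le x y}"

definition down :: "'a topology \<Rightarrow> ('a \<Rightarrow> 'a \<Rightarrow> bool) \<Rightarrow> 'a \<Rightarrow> 'a set" where
  "down T le x = {u \<in> topspace T. le u x}"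

definition up :: "'a topology \<Rightarrow> ('a \<Rightarrow> 'a \<Rightarrow> bool) \<Rightarrow> 'a \<Rightarrow> 'a set" where
  "up T le x = {u \<in> topspace T. le x u}"

definition upper_singular :: "'a topology \<Rightarrow> ('a \<Rightarrow> 'a \<Rightarrow> bool) \<Rightarrow> 'a \<Rightarrow> bool" where
  "upper_singular T le x \<longleftrightarrow>
     (\<forall>W. openin T W \<and> x \<in> W \<longrightarrow>
        (\<exists>O1. openin T O1 \<and> x \<in> O1 \<and> O1 \<subseteq> W \<and>
              \<not> (\<exists>y \<in> topspace T - O1. \<exists>u \<in> O1. le u y)))"

definition upper_compact_bounded :: "'a topology \<Rightarrow> ('a \<Rightarrow> 'a \<Rightarrow> bool) \<Rightarrow> 'a \<Rightarrow> bool" where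
  "upper_compact_bounded T le x \<longleftrightarrow>
     (\<forall>W. openin T W \<and> x \<in> W \<longrightarrow>
        (\<exists>a b. a \<in> W \<and> b \<in> W \<and> le b a \<and>
           up T le b \<inter> down T le a \<subseteq> W \<and>
           x \<in> T interior_of (up T le b \<inter> down T le a) \<and>
           (up T le b \<inter> down T le a) - T interior_of (down T le a) \<noteq> {} \<and>
           compactin T ((up T le b \<inter> down T le a) - T interior_of (down T le a))))"

definition fell_subbasis :: "'a topology \<Rightarrow> 'a set set set" where
  "fell_subbasis T =
     {{A. A \<inter> W \<noteq> {}} | W. openin T W} \<union> {{A. A \<inter> D = {}} | D. compactin T D}"

definition fell :: "'a topology \<Rightarrow> 'a set topology" where
  "fell T = subtopology (topology_generated_by (fell_subbasis T)) {A. closedin T A}"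

definition Cdown :: "'a topology \<Rightarrow> ('a \<Rightarrow> 'a \<Rightarrow> bool) \<Rightarrow> 'a set set" where
  "Cdown T le = down T le ` topspace T"

definition continuous_at_point :: "'a topology \<Rightarrow> 'b topology \<Rightarrow> ('a \<Rightarrow> 'b) \<Rightarrow> 'a \<Rightarrow> bool" where
  "continuous_at_point S T f p \<longleftrightarrow>
     (\<forall>V. openin T V \<and> f p \<in> V \<longrightarrow> (\<exists>U. openin S U \<and> p \<in> U \<and> f ` U \<subseteq> V))"

definition Xex :: "(real \<times> real) set" where
  "Xex = {(u, v). u * v > 0} \<union> {(0, 0)}"

definition coord_le :: "real \<times> real \<Rightarrow> real \<times> real \<Rightarrow> bool" where
  "coord_le p q \<longleftrightarrow> fst p \<le> fst q \<and> snd p \<le> snd q"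

end

theory Submission
  imports Defs
begin

(*
  Near \<theta> the space consists of two open quadrants touching at a point. Every neighbourhood
  of \<theta> contains diagonal points (s, s), s > 0, which lie below points far away from \<theta>;
  so \<theta> is not upper singular. Every order interval b\<^sup>\<up> \<inter> a\<^sup>\<down> that is a
  neighbourhood of \<theta> has its top vertex a in the open positive quadrant, and then the
  edge {fst a} \<times> ]0, snd a] lies outside the interior of a\<^sup>\<down>; it accumulates at
  (fst a, 0), which is missing from X, so the remainder of the interval is not compact.
  Finally, as t \<rightarrow> 0\<^sup>+ the down-sets of (t, 2) converge to \<theta>\<^sup>\<down> in the Fell topology:
  they contain \<theta>\<^sup>\<down>, and a compact set avoiding \<theta>\<^sup>\<down> lies in the open positive
  quadrant, hence in a half-plane u \<ge> m > 0. The points (t, 2) themselves stay away from \<theta>.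
*)

lemma openin_top_of_set_square_nbhd:
  fixes S :: "(real \<times> real) set"
  assumes "openin (top_of_set S) U" "(x, y) \<in> U"
  obtains e where "e > 0" "\<And>s t. (s, t) \<in> S \<Longrightarrow> \<bar>s - x\<bar> < e \<Longrightarrow> \<bar>t - y\<bar> < e \<Longrightarrow> (s, t) \<in> U"
proof -
  obtain e where e: "e > 0" "\<forall>p\<in>S. dist p (x, y) < e \<longrightarrow> p \<in> U"
    using assms by (meson openin_euclidean_subtopology_iff)
  show ?thesis
  proof (rule that[of "e / 2"])
    fix s t assume st: "(s, t) \<in> S" "\<bar>s - x\<bar> < e / 2" "\<bar>t - y\<bar> < e / 2"
    have "dist (s, t) (x, y) \<le> \<bar>s - x\<bar> + \<bar>t - y\<bar>"
      using sqrt_sum_squares_le_sum_abs by (simp add: dist_Pair_Pair dist_real_def)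
    then show "(s, t) \<in> U"
      using st e by simp
  qed (use \<open>e > 0\<close> in simp)
qed

lemma closed_coord_le_graph:
  "closed {(p, q :: real \<times> real). coord_le p q}"
proof -
  have "{(p, q :: real \<times> real). coord_le p q} =
        {z. fst (fst z) \<le> fst (snd z) \<and> snd (fst z) \<le> snd (snd z)}"
    by (auto simp: coord_le_def)
  also have "closed \<dots>"
    by (intro closed_Collect_conj closed_Collect_le continuous_intros)
  finally show ?thesis .
qed

lemma pots_top_of_set_coord_le: "pots (top_of_set S) coord_le"
proof -
  have "{(x, y). x \<in> S \<and> y \<in> S \<and> coord_le x y} = S \<times> S \<inter> {(p, q). coord_le p q}"
    by auto
  then have "closedin (top_of_set (S \<times> S)) {(x, y). x \<in> S \<and> y \<in> S \<and> coord_le x y}"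
    using closed_coord_le_graph by (simp add: closedin_closed_Int)
  then show ?thesis
    by (auto simp: pots_def coord_le_def prod_eq_iff simp flip: subtopology_Times)
qed

lemma closedin_down_top_of_set:
  "closedin (top_of_set S) (down (top_of_set S) coord_le x)"
proof -
  have "down (top_of_set S) coord_le x = S \<inter> {p. fst p \<le> fst x \<and> snd p \<le> snd x}"
    by (auto simp: down_def coord_le_def)
  moreover have "closed {p :: real \<times> real. fst p \<le> fst x \<and> snd p \<le> snd x}"
    by (intro closed_Collect_conj closed_Collect_le continuous_intros)
  ultimately show ?thesis
    by (simp add: closedin_closed_Int)
qed

lemma the_down_eq:
  assumes "pots T le" "x \<in> topspace T"
  shows "(THE y. y \<in> topspace T \<and> down T le y = down T le x) = x"
proof (rule the_equality)
  fix y assume y: "y \<in> topspace T \<and> down T le y = down T le x"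
  then have "le x y" "le y x"
    using assms by (auto simp: pots_def down_def)
  then show "y = x"
    using assms y by (auto simp: pots_def)
qed (use assms in simp)

lemma generate_topology_on_eventually:
  assumes "generate_topology_on \<S> G" "a \<in> G"
    and "\<And>s. s \<in> \<S> \<Longrightarrow> a \<in> s \<Longrightarrow> eventually (\<lambda>i. f i \<in> s) F"
  shows "eventually (\<lambda>i. f i \<in> G) F"
  using assms
proof (induction arbitrary: a rule: generate_topology_on.induct)
  case (Int A B)
  then show ?case
    by (auto intro: eventually_conj)
next
  case (UN K)
  then obtain k where "k \<in> K" "a \<in> k"
    by blast
  with UN show ?case
    by (blast intro: eventually_mono)
qed auto

lemma fell_eventually_in_open:
  assumes "openin (fell T) U" "A \<in> U"
    and closed: "eventually (\<lambda>i. closedin T (B i)) F"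
    and hit: "eventually (\<lambda>i. A \<subseteq> B i) F"
    and miss: "\<And>D. compactin T D \<Longrightarrow> A \<inter> D = {} \<Longrightarrow> eventually (\<lambda>i. B i \<inter> D = {}) F"
  shows "eventually (\<lambda>i. B i \<in> U) F"
proof -
  obtain G where G: "generate_topology_on (fell_subbasis T) G" "U = G \<inter> {A. closedin T A}"
    using assms(1) by (auto simp: fell_def openin_subtopology openin_topology_generated_by_iff)
  have "eventually (\<lambda>i. B i \<in> G) F"
  proof (rule generate_topology_on_eventually[OF G(1)])
    show "A \<in> G"
      using G(2) \<open>A \<in> U\<close> by blast
  next
    fix s assume "s \<in> fell_subbasis T" "A \<in> s"
    then consider W where "s = {A. A \<inter> W \<noteq> {}}" "A \<inter> W \<noteq> {}"
      | D where "s = {A. A \<inter> D = {}}" "compactin T D" "A \<inter> D = {}"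
      by (auto simp: fell_subbasis_def)
    then show "eventually (\<lambda>i. B i \<in> s) F"
    proof cases
      case 1
      from hit show ?thesis
        by (rule eventually_mono) (use 1 in blast)
    next
      case 2
      with miss show ?thesis
        by simp
    qed
  qed
  with closed show ?thesis
    using G(2) by (auto elim: eventually_elim2)
qed

lemma not_continuous_at_point_filter:
  assumes "F \<noteq> bot"
    and converges: "\<And>U. openin S U \<Longrightarrow> p \<in> U \<Longrightarrow> eventually (\<lambda>i. a i \<in> U) F"
    and "openin T V" "g p \<in> V" "eventually (\<lambda>i. g (a i) \<notin> V) F"
  shows "\<not> continuous_at_point S T g p"
proof
  assume "continuous_at_point S T g p"
  then obtain U where "openin S U" "p \<in> U" "g ` U \<subseteq> V"
    using assms(3,4) by (auto simp: continuous_at_point_def)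
  then have "eventually (\<lambda>i. a i \<in> U) F"
    using converges by blast
  then have "eventually (\<lambda>i. g (a i) \<in> V) F"
    by (rule eventually_mono) (use \<open>g ` U \<subseteq> V\<close> in blast)
  with assms(5) have "eventually (\<lambda>_. False) F"
    by (auto elim: eventually_elim2)
  with \<open>F \<noteq> bot\<close> show False
    by (simp add: eventually_False)
qed

lemma Xex_cases:
  assumes "p \<in> Xex"
  obtains "p = (0, 0)" | "fst p > 0" "snd p > 0" | "fst p < 0" "snd p < 0"
  using assms by (cases p) (auto simp: Xex_def zero_less_mult_iff)

lemma diagonal_in_Xex: "(s, s) \<in> Xex"
  by (auto simp: Xex_def zero_less_mult_iff)

lemma openin_Xex_diagonal_nbhd:
  assumes "openin (top_of_set Xex) U" "(0, 0) \<in> U"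
  obtains e where "e > 0" "\<And>s. \<bar>s\<bar> < e \<Longrightarrow> (s, s) \<in> U"
proof -
  obtain e where "e > 0" "\<And>s t. (s, t) \<in> Xex \<Longrightarrow> \<bar>s\<bar> < e \<Longrightarrow> \<bar>t\<bar> < e \<Longrightarrow> (s, t) \<in> U"
    using openin_top_of_set_square_nbhd[OF assms] by auto
  then show ?thesis
    using that diagonal_in_Xex by blast
qed

lemma openin_Xex_below_one: "openin (top_of_set Xex) {p \<in> Xex. snd p < 1}"
proof -
  have "open {p :: real \<times> real. snd p < 1}"
    by (intro open_Collect_less continuous_intros)
  then show ?thesis
    by (auto simp: openin_open)
qed

lemma not_upper_singular_origin: "\<not> upper_singular (top_of_set Xex) coord_le (0, 0)"
proof
  assume "upper_singular (top_of_set Xex) coord_le (0, 0)"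
  then obtain O1 where O1: "openin (top_of_set Xex) O1" "(0, 0) \<in> O1" "O1 \<subseteq> {p \<in> Xex. snd p < 1}"
    "\<not> (\<exists>y \<in> Xex - O1. \<exists>u \<in> O1. coord_le u y)"
    using openin_Xex_below_one diagonal_in_Xex[of 0] by (force simp: upper_singular_def)
  then obtain e where e: "e > 0" "\<And>s. \<bar>s\<bar> < e \<Longrightarrow> (s, s) \<in> O1"
    using openin_Xex_diagonal_nbhd by metis
  define s where "s = min (e / 2) 1"
  have "(s, s) \<in> O1" "coord_le (s, s) (2, 2)"
    using e by (auto simp: s_def coord_le_def)
  moreover have "(2, 2) \<in> Xex - O1"
    using O1(3) diagonal_in_Xex by auto
  ultimately show False
    using O1(4) by blast
qed

lemma right_edge_notin_interior_down:
  assumes "fst a > 0" "t > 0"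
  shows "(fst a, t) \<notin> top_of_set Xex interior_of down (top_of_set Xex) coord_le a"
proof
  assume "(fst a, t) \<in> top_of_set Xex interior_of down (top_of_set Xex) coord_le a"
  then obtain U where U: "openin (top_of_set Xex) U" "(fst a, t) \<in> U"
      "U \<subseteq> down (top_of_set Xex) coord_le a"
    by (auto simp: interior_of_def)
  obtain e where "e > 0" "\<And>s r. (s, r) \<in> Xex \<Longrightarrow> \<bar>s - fst a\<bar> < e \<Longrightarrow> \<bar>r - t\<bar> < e \<Longrightarrow> (s, r) \<in> U"
    using U(1,2) by (rule openin_top_of_set_square_nbhd) blast
  moreover have "(fst a + e / 2, t) \<in> Xex"
    using assms \<open>e > 0\<close> by (simp add: Xex_def)
  ultimately have "(fst a + e / 2, t) \<in> down (top_of_set Xex) coord_le a"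
    using U(3) by auto
  with \<open>e > 0\<close> show False
    by (simp add: down_def coord_le_def)
qed

lemma not_upper_compact_bounded_origin:
  "\<not> upper_compact_bounded (top_of_set Xex) coord_le (0, 0)"
proof
  let ?T = "top_of_set Xex"
  assume ucb: "upper_compact_bounded ?T coord_le (0, 0)"
  have "openin ?T Xex" "(0, 0) \<in> Xex"
    using openin_topspace[of ?T] diagonal_in_Xex[of 0] by auto
  with ucb obtain a b where ab: "(0, 0) \<in> ?T interior_of (up ?T coord_le b \<inter> down ?T coord_le a)"
    "compactin ?T ((up ?T coord_le b \<inter> down ?T coord_le a) - ?T interior_of (down ?T coord_le a))"
    unfolding upper_compact_bounded_def by blast
  define K where "K = (up ?T coord_le b \<inter> down ?T coord_le a) - ?T interior_of (down ?T coord_le a)"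
  obtain U where U: "openin ?T U" "(0, 0) \<in> U" "U \<subseteq> up ?T coord_le b \<inter> down ?T coord_le a"
    using ab(1) by (auto simp: interior_of_def)
  obtain e where e: "e > 0" "\<And>s. \<bar>s\<bar> < e \<Longrightarrow> (s, s) \<in> U"
    using U(1,2) by (rule openin_Xex_diagonal_nbhd) blast
  then have "(e / 2, e / 2) \<in> U" "(- e / 2, - e / 2) \<in> U"
    by auto
  then have "coord_le (e / 2, e / 2) a" "coord_le b (- e / 2, - e / 2)"
    using U(3) by (auto simp: up_def down_def)
  with e have a: "fst a > 0" "snd a > 0" and b: "fst b < 0" "snd b < 0"
    by (auto simp: coord_le_def)
  have edge: "(fst a, t) \<in> K" if "0 < t" "t \<le> snd a" for t
  proof -
    have "(fst a, t) \<in> Xex"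
      using a that by (simp add: Xex_def)
    then show ?thesis
      using right_edge_notin_interior_down[OF a(1) \<open>0 < t\<close>] a b that
      by (auto simp: K_def up_def down_def coord_le_def)
  qed
  have "closed K"
    using ab(2) by (simp add: K_def compactin_subtopology compact_imp_closed)
  moreover have "eventually (\<lambda>t. (fst a, t) \<in> K) (at_right 0)"
    using eventually_at_right_real[OF a(2)] by (rule eventually_mono) (simp add: edge)
  moreover have "((\<lambda>t. (fst a, t)) \<longlongrightarrow> (fst a, 0)) (at_right 0)"
    by (intro tendsto_intros)
  ultimately have "(fst a, 0) \<in> K"
    by (auto intro: Lim_in_closed_set)
  then have "(fst a, 0) \<in> Xex"
    by (simp add: K_def up_def)
  with a show False
    by (simp add: Xex_def)
qed

lemma compactin_Xex_eventually_misses_down: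
  assumes "compactin (top_of_set Xex) D" "down (top_of_set Xex) coord_le (0, 0) \<inter> D = {}"
  shows "eventually (\<lambda>t. down (top_of_set Xex) coord_le (t, c) \<inter> D = {}) (at_right 0)"
proof (cases "D = {}")
  case False
  have D: "D \<subseteq> Xex" "compact D"
    using assms(1) by (auto simp: compactin_subtopology)
  have fst_pos: "fst p > 0" if "p \<in> D" for p
  proof -
    have "p \<in> Xex" "p \<notin> down (top_of_set Xex) coord_le (0, 0)"
      using D(1) that assms(2) by auto
    then show ?thesis
      by (cases rule: Xex_cases) (use \<open>p \<in> Xex\<close> in \<open>auto simp: down_def coord_le_def\<close>)
  qed
  have "compact (fst ` D)"
    using D(2) by (intro compact_continuous_image continuous_intros)
  then obtain m where "m \<in> fst ` D" and m_le: "\<And>p. p \<in> D \<Longrightarrow> m \<le> fst p"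
    using compact_attains_inf[of "fst ` D"] False by auto
  with fst_pos have "m > 0"
    by auto
  then show ?thesis
  proof (rule eventually_at_right_real[THEN eventually_mono])
    fix t assume "t \<in> {0<..<m}"
    with m_le show "down (top_of_set Xex) coord_le (t, c) \<inter> D = {}"
      by (fastforce simp: down_def coord_le_def)
  qed
qed simp

lemma down_tendsto_down_origin_fell:
  assumes "c > 0"
    and "openin (subtopology (fell (top_of_set Xex)) (Cdown (top_of_set Xex) coord_le)) U"
    and "down (top_of_set Xex) coord_le (0, 0) \<in> U"
  shows "eventually (\<lambda>t. down (top_of_set Xex) coord_le (t, c) \<in> U) (at_right 0)"
proof -
  let ?T = "top_of_set Xex"
  obtain U' where U': "openin (fell ?T) U'" "U = U' \<inter> Cdown ?T coord_le"
    using assms(2) by (auto simp: openin_subtopology)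
  have pos: "eventually (\<lambda>t. t > 0) (at_right (0 :: real))"
    by (rule eventually_at_right_less)
  have "eventually (\<lambda>t. down ?T coord_le (t, c) \<in> U') (at_right 0)"
  proof (rule fell_eventually_in_open[OF U'(1)])
    show "down ?T coord_le (0, 0) \<in> U'"
      using assms(3) U'(2) by blast
    show "eventually (\<lambda>t. closedin ?T (down ?T coord_le (t, c))) (at_right 0)"
      by (simp add: closedin_down_top_of_set always_eventually)
    show "eventually (\<lambda>t. down ?T coord_le (0, 0) \<subseteq> down ?T coord_le (t, c)) (at_right 0)"
      using pos by (rule eventually_mono) (use \<open>c > 0\<close> in \<open>auto simp: down_def coord_le_def\<close>)
  qed (rule compactin_Xex_eventually_misses_down)
  moreover have "eventually (\<lambda>t. down ?T coord_le (t, c) \<in> Cdown ?T coord_le) (at_right 0)"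
    using pos
  proof (rule eventually_mono)
    fix t :: real assume "t > 0"
    with \<open>c > 0\<close> have "(t, c) \<in> topspace ?T"
      by (simp add: Xex_def)
    then show "down ?T coord_le (t, c) \<in> Cdown ?T coord_le"
      unfolding Cdown_def by (rule imageI)
  qed
  ultimately show ?thesis
    by eventually_elim (simp add: U'(2))
qed

lemma not_continuous_down_inverse_origin:
  "\<not> continuous_at_point (subtopology (fell (top_of_set Xex)) (Cdown (top_of_set Xex) coord_le))
     (top_of_set Xex) (\<lambda>A. THE x. x \<in> Xex \<and> down (top_of_set Xex) coord_le x = A)
     (down (top_of_set Xex) coord_le (0, 0))"
proof (rule not_continuous_at_point_filter)
  let ?T = "top_of_set Xex"
  have inverse: "(THE y. y \<in> Xex \<and> down ?T coord_le y = down ?T coord_le x) = x" if "x \<in> Xex" for x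
    using the_down_eq[OF pots_top_of_set_coord_le, of x Xex] that by simp
  show "at_right (0 :: real) \<noteq> bot"
    by simp
  show "eventually (\<lambda>t. down ?T coord_le (t, 2) \<in> U) (at_right 0)"
    if "openin (subtopology (fell ?T) (Cdown ?T coord_le)) U" "down ?T coord_le (0, 0) \<in> U" for U
    using that by (intro down_tendsto_down_origin_fell) auto
  show "openin ?T {p \<in> Xex. snd p < 1}"
    by (rule openin_Xex_below_one)
  show "(THE x. x \<in> Xex \<and> down ?T coord_le x = down ?T coord_le (0, 0)) \<in> {p \<in> Xex. snd p < 1}"
    using inverse diagonal_in_Xex[of 0] by simp
  show "eventually (\<lambda>t. (THE x. x \<in> Xex \<and> down ?T coord_le x = down ?T coord_le (t, 2))
      \<notin> {p \<in> Xex. snd p < 1}) (at_right 0)"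
    using eventually_at_right_less
  proof (rule eventually_mono)
    fix t :: real assume "t > 0"
    then have "(t, 2) \<in> Xex"
      by (simp add: Xex_def)
    then show "(THE x. x \<in> Xex \<and> down ?T coord_le x = down ?T coord_le (t, 2)) \<notin> {p \<in> Xex. snd p < 1}"
      by (simp add: inverse)
  qed
qed

theorem mainTheorem3:
  defines "T \<equiv> subtopology euclidean Xex"
  shows "pots T coord_le \<and>
         \<not> upper_singular T coord_le (0, 0) \<and>
         \<not> upper_compact_bounded T coord_le (0, 0) \<and>
         \<not> continuous_at_point (subtopology (fell T) (Cdown T coord_le)) T
              (\<lambda>A. THE x. x \<in> topspace T \<and> down T coord_le x = A)
              (down T coord_le (0, 0))"
  using pots_top_of_set_coord_le not_upper_singular_origin not_upper_compact_bounded_origin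
    not_continuous_down_inverse_origin
  by (simp add: T_def)

end
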